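(* For every $n\geq 1$: $\widehat{\left(\Sigma_n^0\text{-}\mathrm{LLPO}\right)}\leq_W\mathrm{Det}_{\mathfrak{D}_n}$ and $\left(\Sigma_n^0\text{-}\mathrm{LEM}\right)\leq_W\mathrm{Win}_{\mathfrak{D}_n}$.
   Context: $f\leq_W g$ (Weihrauch reducibility between partial multivalued maps on represented spaces) iff there are computable partial $K,H:\subseteq\mathbb{N}^\mathbb{N}\to\mathbb{N}^\mathbb{N}$ such that for every realizer $G$ of $g$, $p\mapsto K(\langle p,G(H(p))\rangle)$ is a realizer of $f$. $\widehat{f}(x_0,x_1,\ldots)=(f(x_0),f(x_1),\ldots)$. For $p\in\{0,1\}^\mathbb{N}$ let $\varphi_n(p)$ be the statement $\forall k_1\exists k_2\ldots\natural k_n\ p(\langle k_1,\ldots,k_n\rangle)=1$ (alternating quantifiers starting with $\forall$; $\natural=\forall$ if $n$ odd, $\exists$ if $n$ even; $\langle\cdot\rangle$ a computable tupling). $\Sigma^0_n\text{-}\mathrm{LEM}:\{0,1\}^\mathbb{N}\to\{0,1\}$ outputs $1$ iff $\varphi_n(p)$ holds. $\Sigma^0_n\text{-}\mathrm{LLPO}$ takes a pair $(p_0,p_1)$ for which $\varphi_n(p_0)$ or $\varphi_n(p_1)$ holds, and outputs any $i\in\{0,1\}$ with $\varphi_n(p_i)$. $\mathfrak{D}_n$ ($n$-th level of the difference hierarchy) consists of the sets $D\subseteq\{0,1\}^\mathbb{N}$ for which there are open $U_0,\ldots,U_{n-1}$ with $x\in D\iff \min\{\beta\mid x\in U_\beta\}\not\equiv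 n \pmod 2$ (where $\min\emptyset=n$); such $D$ is named by names of $U_0,\ldots,U_{n-1}$ (an open set being named by an enumeration of words $w$ with $U=\bigcup w\{0,1\}^\mathbb{N}$). Games: win/lose games with players 1,2, choices $\{0,1\}$, turn function $d:\{0,1\}^*\to\{1,2\}$ (lookup table), winning set for player 1, the rest won by player 2; a strategy is winning if all plays consistent with it are won. $\mathrm{Det}_\Gamma$: input such a game with player-1 winning set given by a $\Gamma$-name; output any strategy profile (function $\{0,1\}^*\to\{0,1\}$) in which one strategy is winning. $\mathrm{Win}_\Gamma$: same input, output the player having a winning strategy. *)

theory Defs
  imports Main "HOL-Library.Nat_Bijection"
begin

type_synonym baire = "nat \<Rightarrow> nat"

text \<open>Programs for (unary, via Cantor pairing) partial recursive functions relative
  to an oracle p in Baire space.\<close>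

datatype prog = Zer | Sc | Fs | Sn | Orc | Cmp prog prog | Pr prog prog
  | Rec prog prog | Mu prog

inductive ev :: "baire \<Rightarrow> prog \<Rightarrow> nat \<Rightarrow> nat \<Rightarrow> bool" for p :: baire where
  ev_zer: "ev p Zer x 0"
| ev_sc: "ev p Sc x (Suc x)"
| ev_fs: "ev p Fs x (fst (prod_decode x))"
| ev_sn: "ev p Sn x (snd (prod_decode x))"
| ev_orc: "ev p Orc x (p x)"
| ev_cmp: "ev p g x y \<Longrightarrow> ev p f y z \<Longrightarrow> ev p (Cmp f g) x z"
| ev_pr: "ev p f x y \<Longrightarrow> ev p g x z \<Longrightarrow> ev p (Pr f g) x (prod_encode (y, z))"
| ev_rec0: "ev p f x y \<Longrightarrow> ev p (Rec f g) (prod_encode (x, 0)) y"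
| ev_recS: "ev p (Rec f g) (prod_encode (x, n)) y \<Longrightarrow>
            ev p g (prod_encode (x, prod_encode (n, y))) z \<Longrightarrow>
            ev p (Rec f g) (prod_encode (x, Suc n)) z"
| ev_mu: "ev p f (prod_encode (x, n)) 0 \<Longrightarrow>
          (\<forall>m<n. \<exists>v. 0 < v \<and> ev p f (prod_encode (x, m)) v) \<Longrightarrow>
          ev p (Mu f) x n"

definition computable :: "(baire \<Rightarrow> baire option) \<Rightarrow> bool" where
  "computable F \<longleftrightarrow> (\<exists>c. \<forall>p q. F p = Some q \<longrightarrow> (\<forall>i. ev p c i (q i)))"

definition baire_pair :: "baire \<Rightarrow> baire \<Rightarrow> baire" where
  "baire_pair p q = (\<lambda>i. if even i then p (i div 2) else q (i div 2))"

text \<open>A representation of X is a partial map from Baire space onto (a subset of) X.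
  A partial multivalued map f is a map into sets; dom f = {x. f x \<noteq> {}}.\<close>
type_synonym 'a rep = "baire \<Rightarrow> 'a option"

definition realizer :: "'a rep \<Rightarrow> 'b rep \<Rightarrow> ('a \<Rightarrow> 'b set) \<Rightarrow> (baire \<Rightarrow> baire option) \<Rightarrow> bool" where
  "realizer dX dY f F \<longleftrightarrow>
     (\<forall>p x. dX p = Some x \<longrightarrow> f x \<noteq> {} \<longrightarrow>
        (\<exists>q y. F p = Some q \<and> dY q = Some y \<and> y \<in> f x))"

definition weihrauch_le ::
  "'a rep \<Rightarrow> 'b rep \<Rightarrow> ('a \<Rightarrow> 'b set) \<Rightarrow> 'c rep \<Rightarrow> 'd rep \<Rightarrow> ('c \<Rightarrow> 'd set) \<Rightarrow> bool" where
  "weihrauch_le dX dY f dZ dW g \<longleftrightarrow>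
     (\<exists>K H. computable K \<and> computable H \<and>
        (\<forall>G. realizer dZ dW g G \<longrightarrow>
           realizer dX dY f (\<lambda>p. Option.bind (H p) (\<lambda>h. Option.bind (G h) (\<lambda>q. K (baire_pair p q))))))"

definition hat :: "('a \<Rightarrow> 'b set) \<Rightarrow> (nat \<Rightarrow> 'a) \<Rightarrow> (nat \<Rightarrow> 'b) set" where
  "hat f xs = {ys. \<forall>i. ys i \<in> f (xs i)}"

type_synonym cantor = "nat \<Rightarrow> bool"

text \<open>{0,1} is modelled by bool (1 = True); {0,1}^N by nat => bool.\<close>
definition rep_bool :: "bool rep" where
  "rep_bool p = (if p 0 \<le> 1 then Some (p 0 = 1) else None)"

definition rep_cantor :: "cantor rep" where
  "rep_cantor p = (if \<forall>i. p i \<le> 1 then Some (\<lambda>i. p i = 1) else None)"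

definition rep_prod :: "'a rep \<Rightarrow> 'b rep \<Rightarrow> ('a \<times> 'b) rep" where
  "rep_prod dX dY r = (case (dX (\<lambda>i. r (2 * i)), dY (\<lambda>i. r (2 * i + 1))) of
      (Some x, Some y) \<Rightarrow> Some (x, y) | _ \<Rightarrow> None)"

definition rep_seq :: "'a rep \<Rightarrow> (nat \<Rightarrow> 'a) rep" where
  "rep_seq dX r = (if \<forall>i. dX (\<lambda>j. r (prod_encode (i, j))) \<noteq> None
      then Some (\<lambda>i. the (dX (\<lambda>j. r (prod_encode (i, j))))) else None)"

fun alt :: "bool \<Rightarrow> nat \<Rightarrow> (nat list \<Rightarrow> bool) \<Rightarrow> nat list \<Rightarrow> bool" where
  "alt b 0 P ks = P ks"
| "alt True (Suc m) P ks = (\<forall>k. alt False m P (ks @ [k]))"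
| "alt False (Suc m) P ks = (\<exists>k. alt True m P (ks @ [k]))"

text \<open>phi n p: forall k1 exists k2 ... p(<k1,...,kn>) = 1, with list_encode as tupling.\<close>
definition phi :: "nat \<Rightarrow> cantor \<Rightarrow> bool" where
  "phi n p = alt True n (\<lambda>ks. p (list_encode ks)) []"

definition sigma_LEM :: "nat \<Rightarrow> cantor \<Rightarrow> bool set" where
  "sigma_LEM n p = {phi n p}"

definition sigma_LLPO :: "nat \<Rightarrow> cantor \<times> cantor \<Rightarrow> bool set" where
  "sigma_LLPO n pp = {i. phi n (if i then snd pp else fst pp)}"

text \<open>Bijective coding of binary words by natural numbers.\<close>
fun wcode :: "bool list \<Rightarrow> nat" where
  "wcode [] = 0"
| "wcode (b # w) = 2 * wcode w + 1 + (if b then 1 else 0)"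

definition prefix_of :: "cantor \<Rightarrow> nat \<Rightarrow> bool list" where
  "prefix_of x k = map x [0..<k]"

text \<open>Open set named by an enumeration of words: value 0 means no word,
  value Suc (wcode w) enumerates w; U = union of the cylinders w{0,1}^N.\<close>
definition open_of :: "baire \<Rightarrow> cantor set" where
  "open_of r = {x. \<exists>i w. r i = Suc (wcode w) \<and> prefix_of x (length w) = w}"

definition dset :: "nat \<Rightarrow> (nat \<Rightarrow> cantor set) \<Rightarrow> cantor set" where
  "dset n U = {x. (if \<exists>\<beta><n. x \<in> U \<beta> then (LEAST \<beta>. x \<in> U \<beta>) else n) mod 2 \<noteq> n mod 2}"

definition rep_D :: "nat \<Rightarrow> cantor set rep" where
  "rep_D n r = Some (dset n (\<lambda>\<beta>. open_of (\<lambda>j. r (prod_encode (\<beta>, j)))))"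

datatype player = P1 | P2

text \<open>A game: turn function (lookup table) and winning set of player 1.\<close>
type_synonym game = "(bool list \<Rightarrow> player) \<times> cantor set"

definition rep_player :: "player rep" where
  "rep_player p = (if p 0 = 1 then Some P1 else if p 0 = 2 then Some P2 else None)"

definition rep_turn :: "(bool list \<Rightarrow> player) rep" where
  "rep_turn p = (if \<forall>w. p (wcode w) \<in> {1, 2}
      then Some (\<lambda>w. if p (wcode w) = 1 then P1 else P2) else None)"

definition rep_game :: "nat \<Rightarrow> game rep" where
  "rep_game n r = (case (rep_turn (\<lambda>i. r (2 * i)), rep_D n (\<lambda>i. r (2 * i + 1))) of
      (Some d, Some W) \<Rightarrow> Some (d, W) | _ \<Rightarrow> None)"

text \<open>Strategy profiles: functions {0,1}^* -> {0,1}, given by lookup tables.\<close>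
definition rep_profile :: "(bool list \<Rightarrow> bool) rep" where
  "rep_profile p = (if \<forall>w. p (wcode w) \<le> 1 then Some (\<lambda>w. p (wcode w) = 1) else None)"

definition consistent :: "game \<Rightarrow> player \<Rightarrow> (bool list \<Rightarrow> bool) \<Rightarrow> cantor \<Rightarrow> bool" where
  "consistent G i \<sigma> x \<longleftrightarrow>
     (\<forall>k. fst G (prefix_of x k) = i \<longrightarrow> x k = \<sigma> (prefix_of x k))"

definition wins :: "game \<Rightarrow> player \<Rightarrow> cantor \<Rightarrow> bool" where
  "wins G i x \<longleftrightarrow> (if i = P1 then x \<in> snd G else x \<notin> snd G)"

text \<open>Player i's strategy (the part of the profile at positions where i moves) is winning.\<close>
definition winning :: "game \<Rightarrow> player \<Rightarrow> (bool list \<Rightarrow> bool) \<Rightarrow> bool" where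
  "winning G i \<sigma> \<longleftrightarrow> (\<forall>x. consistent G i \<sigma> x \<longrightarrow> wins G i x)"

definition Det :: "game \<Rightarrow> (bool list \<Rightarrow> bool) set" where
  "Det G = {\<sigma>. winning G P1 \<sigma> \<or> winning G P2 \<sigma>}"

definition Win :: "game \<Rightarrow> player set" where
  "Win G = {i. \<exists>\<sigma>. winning G i \<sigma>}"

end

theory Submission
  imports Defs
begin

(*
  Both reductions rest on one game G(Q), computed from a
  family Q i b of binary sequences (i a natural number, b a bit): player 1 names an
  index i by the word 0^i 1, player 2 answers a bit b, and then the N outer
  quantifiers of phi_n(Q i b) are played as numbers in unary (0^k 1), player 1
  choosing the universal and player 2 the existential instances.  Player 1 wins if
  all blocks are completed and the innermost quantifier fails (an open condition),
  or if the play gets stuck inside a number of player 2; the number of completed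
  blocks is monotone, which places the winning set in D_n.  Hence player 2 wins
  iff every index i admits a bit b with phi_n(Q i b), and then any profile with a
  winning component answers such a bit at the position 0^i 1.
*)

section \<open>Uniformly computable total functions\<close>

definition rec_fn :: "(baire \<Rightarrow> nat \<Rightarrow> nat) \<Rightarrow> bool" where
  "rec_fn f \<longleftrightarrow> (\<exists>c. \<forall>p x. ev p c x (f p x))"

lemma rec_fnI: "(\<And>p x. ev p c x (f p x)) \<Longrightarrow> rec_fn f"
  unfolding rec_fn_def by blast

lemma computable_rec_fn: "rec_fn f \<Longrightarrow> computable (\<lambda>p. Some (f p))"
  unfolding computable_def rec_fn_def by auto

lemma rec_fn_zero: "rec_fn (\<lambda>p x. 0)" by (rule rec_fnI[of Zer]) (rule ev_zer)
lemma rec_fn_succ: "rec_fn (\<lambda>p x. Suc x)" by (rule rec_fnI[of Sc]) (rule ev_sc)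
lemma rec_fn_fst_decode: "rec_fn (\<lambda>p x. fst (prod_decode x))" by (rule rec_fnI[of Fs]) (rule ev_fs)
lemma rec_fn_snd_decode: "rec_fn (\<lambda>p x. snd (prod_decode x))" by (rule rec_fnI[of Sn]) (rule ev_sn)
lemma rec_fn_oracle: "rec_fn (\<lambda>p x. p x)" by (rule rec_fnI[of Orc]) (rule ev_orc)

lemma rec_fn_comp: "rec_fn f \<Longrightarrow> rec_fn g \<Longrightarrow> rec_fn (\<lambda>p x. f p (g p x))"
  unfolding rec_fn_def by (metis ev_cmp)

lemma rec_fn_pair [intro]: "rec_fn f \<Longrightarrow> rec_fn g \<Longrightarrow> rec_fn (\<lambda>p x. prod_encode (f p x, g p x))"
  unfolding rec_fn_def by (metis ev_pr)

lemma rec_fn_id [intro]: "rec_fn (\<lambda>p x. x)"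
  using rec_fn_pair[OF rec_fn_fst_decode rec_fn_snd_decode] by simp

lemma rec_fn_iterate_decoded:
  assumes "rec_fn s" shows "rec_fn (\<lambda>p z. (s p ^^ snd (prod_decode z)) (fst (prod_decode z)))"
proof -
  obtain cs where cs: "\<And>p x. ev p cs x (s p x)" using assms unfolding rec_fn_def by blast
  obtain ci where ci: "\<And>p x. ev p ci x x" using rec_fn_id unfolding rec_fn_def by blast
  let ?g = "Cmp cs (Cmp Sn Sn)"
  have g: "ev p ?g (prod_encode (x, prod_encode (k, y))) (s p y)" for p x k y
    by (rule ev_cmp[OF ev_cmp[OF ev_sn ev_sn]], simp, rule cs)
  have "ev p (Rec ci ?g) (prod_encode (x, k)) ((s p ^^ k) x)" for p x k
  proof (induction k)
    case 0 then show ?case using ev_rec0[OF ci] by simp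
  next
    case (Suc k) show ?case using ev_recS[OF Suc g] by simp
  qed
  hence "ev p (Rec ci ?g) z ((s p ^^ snd (prod_decode z)) (fst (prod_decode z)))" for p z
    by (metis prod.collapse prod_decode_inverse)
  thus ?thesis by (rule rec_fnI)
qed

lemma rec_fn_iterate [intro]:
  assumes "rec_fn s" "rec_fn a" "rec_fn b" shows "rec_fn (\<lambda>p x. (s p ^^ b p x) (a p x))"
  using rec_fn_comp[OF rec_fn_iterate_decoded[OF assms(1)] rec_fn_pair[OF assms(2) assms(3)]] by simp

lemma rec_fn_Suc [intro]: "rec_fn a \<Longrightarrow> rec_fn (\<lambda>p x. Suc (a p x))"
  using rec_fn_comp[OF rec_fn_succ] by blast
lemma rec_fn_fst [intro]: "rec_fn a \<Longrightarrow> rec_fn (\<lambda>p x. fst (prod_decode (a p x)))"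
  using rec_fn_comp[OF rec_fn_fst_decode] by blast
lemma rec_fn_snd [intro]: "rec_fn a \<Longrightarrow> rec_fn (\<lambda>p x. snd (prod_decode (a p x)))"
  using rec_fn_comp[OF rec_fn_snd_decode] by blast
lemma rec_fn_query [intro]: "rec_fn a \<Longrightarrow> rec_fn (\<lambda>p x. p (a p x))"
  using rec_fn_comp[OF rec_fn_oracle] by blast

lemma rec_fn_const [intro]: "rec_fn (\<lambda>p x. k)"
  by (induction k) (auto intro: rec_fn_zero)

lemma rec_fn_add [intro]: "rec_fn a \<Longrightarrow> rec_fn b \<Longrightarrow> rec_fn (\<lambda>p x. a p x + b p x)"
proof -
  assume "rec_fn a" "rec_fn b"
  hence "rec_fn (\<lambda>p x. (Suc ^^ b p x) (a p x))" by (intro rec_fn_iterate rec_fn_succ)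
  moreover have iter_Suc: "(Suc ^^ k) m = m + k" for k m by (induction k) auto
  ultimately show ?thesis by (simp only: iter_Suc)
qed

text \<open>The predecessor is obtained by iterating (m - 1, m) \<mapsto> (m, m + 1) from (0, 0).\<close>
lemma rec_fn_pred [intro]: "rec_fn a \<Longrightarrow> rec_fn (\<lambda>p x. a p x - 1)"
proof -
  assume a: "rec_fn a"
  define step :: "nat \<Rightarrow> nat" where
    "step y = prod_encode (snd (prod_decode y), Suc (snd (prod_decode y)))" for y
  have "(step ^^ k) (prod_encode (0, 0)) = prod_encode (k - 1, k)" for k
    by (induction k) (auto simp: step_def)
  moreover have "rec_fn (\<lambda>p x. fst (prod_decode ((step ^^ a p x) (prod_encode (0, 0)))))"
    unfolding step_def by (intro rec_fn_fst rec_fn_iterate rec_fn_pair rec_fn_snd rec_fn_Suc rec_fn_id rec_fn_const a)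
  ultimately show ?thesis by simp
qed

lemma rec_fn_diff [intro]: "rec_fn a \<Longrightarrow> rec_fn b \<Longrightarrow> rec_fn (\<lambda>p x. a p x - b p x)"
proof -
  assume "rec_fn a" "rec_fn b"
  hence "rec_fn (\<lambda>p x. ((\<lambda>y. y - 1) ^^ b p x) (a p x))" by (intro rec_fn_iterate rec_fn_pred rec_fn_id)
  moreover have "((\<lambda>y. y - 1) ^^ k) m = m - k" for k m :: nat by (induction k) auto
  ultimately show ?thesis by simp
qed

text \<open>Case distinction on zero: swapping the components of the pair (a, b) zero
  or one times, depending on c, selects a or b.\<close>
lemma rec_fn_if_zero:
  assumes c: "rec_fn c" and a: "rec_fn a" and b: "rec_fn b"
  shows "rec_fn (\<lambda>p x. if c p x = 0 then a p x else b p x)"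
proof -
  define swap :: "nat \<Rightarrow> nat" where
    "swap y = prod_encode (snd (prod_decode y), snd (prod_decode y))" for y
  have "rec_fn (\<lambda>p x. fst (prod_decode ((swap ^^ (1 - (1 - c p x))) (prod_encode (a p x, b p x)))))"
    unfolding swap_def by (intro rec_fn_fst rec_fn_iterate rec_fn_pair rec_fn_diff rec_fn_snd rec_fn_id rec_fn_const c a b)
  moreover have "fst (prod_decode ((swap ^^ (1 - (1 - k))) (prod_encode (u, v)))) = (if k = 0 then u else v)"
    for k u v by (cases k) (auto simp: swap_def)
  ultimately show ?thesis by simp
qed

text \<open>A predicate is decidable if its characteristic function (0 for true) is
  uniformly computable.\<close>
definition dec_pred :: "(baire \<Rightarrow> nat \<Rightarrow> bool) \<Rightarrow> bool" where
  "dec_pred P \<longleftrightarrow> rec_fn (\<lambda>p x. if P p x then 0 else 1)"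

lemma rec_fn_if [intro]:
  "dec_pred P \<Longrightarrow> rec_fn a \<Longrightarrow> rec_fn b \<Longrightarrow> rec_fn (\<lambda>p x. if P p x then a p x else b p x)"
proof -
  assume "dec_pred P" "rec_fn a" "rec_fn b"
  hence "rec_fn (\<lambda>p x. if (if P p x then 0 else 1) = (0::nat) then a p x else b p x)"
    unfolding dec_pred_def by (intro rec_fn_if_zero)
  moreover have "((if Q then 0 else 1) = (0::nat)) = Q" for Q by simp
  ultimately show ?thesis by (simp only:)
qed

lemma dec_pred_zero: "rec_fn a \<Longrightarrow> dec_pred (\<lambda>p x. a p x = 0)"
  unfolding dec_pred_def using rec_fn_if_zero[of a "\<lambda>p x. 0" "\<lambda>p x. 1"] by auto

lemma dec_pred_const [intro]: "dec_pred (\<lambda>p x. c)"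
  unfolding dec_pred_def by (cases c) auto

lemma dec_pred_eq [intro]: "rec_fn a \<Longrightarrow> rec_fn b \<Longrightarrow> dec_pred (\<lambda>p x. a p x = b p x)"
proof -
  assume "rec_fn a" "rec_fn b"
  hence "dec_pred (\<lambda>p x. (a p x - b p x) + (b p x - a p x) = 0)" by (intro dec_pred_zero rec_fn_add rec_fn_diff)
  moreover have "((u::nat) - v) + (v - u) = 0 \<longleftrightarrow> u = v" for u v by auto
  ultimately show ?thesis by simp
qed

lemma dec_pred_le [intro]: "rec_fn a \<Longrightarrow> rec_fn b \<Longrightarrow> dec_pred (\<lambda>p x. a p x \<le> b p x)"
  using dec_pred_zero[of "\<lambda>p x. a p x - b p x"] by auto

lemma dec_pred_less [intro]: "rec_fn a \<Longrightarrow> rec_fn b \<Longrightarrow> dec_pred (\<lambda>p x. a p x < b p x)"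
  using dec_pred_le[of "\<lambda>p x. Suc (a p x)" b] by (auto simp: Suc_le_eq)

lemma dec_pred_if [intro]:
  "dec_pred C \<Longrightarrow> dec_pred A \<Longrightarrow> dec_pred B \<Longrightarrow> dec_pred (\<lambda>p x. if C p x then A p x else B p x)"
  unfolding dec_pred_def
  using rec_fn_if[of C "\<lambda>p x. if A p x then 0 else 1" "\<lambda>p x. if B p x then 0 else 1"]
  by (simp add: if_distrib[of "\<lambda>b. if b then (0::nat) else 1"] dec_pred_def)

lemma dec_pred_cong: "dec_pred P \<Longrightarrow> (\<And>p x. P p x = Q p x) \<Longrightarrow> dec_pred Q"
proof -
  assume "dec_pred P" "\<And>p x. P p x = Q p x"
  then have "P = Q" by blast
  with \<open>dec_pred P\<close> show ?thesis by simp
qed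

lemma dec_pred_not [intro]: "dec_pred P \<Longrightarrow> dec_pred (\<lambda>p x. \<not> P p x)"
  by (rule dec_pred_cong[OF dec_pred_if[of P "\<lambda>p x. False" "\<lambda>p x. True"]]) auto

lemma dec_pred_conj [intro]: "dec_pred P \<Longrightarrow> dec_pred Q \<Longrightarrow> dec_pred (\<lambda>p x. P p x \<and> Q p x)"
  by (rule dec_pred_cong[OF dec_pred_if[of P Q "\<lambda>p x. False"]]) auto

lemma dec_pred_disj [intro]: "dec_pred P \<Longrightarrow> dec_pred Q \<Longrightarrow> dec_pred (\<lambda>p x. P p x \<or> Q p x)"
  by (rule dec_pred_cong[OF dec_pred_if[of P "\<lambda>p x. True" Q]]) auto

lemma dec_pred_iff [intro]: "dec_pred P \<Longrightarrow> dec_pred Q \<Longrightarrow> dec_pred (\<lambda>p x. P p x = Q p x)"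
  by (rule dec_pred_cong[OF dec_pred_if[of Q P "\<lambda>p x. \<not> P p x"]]) auto

text \<open>Halving: iterating (q, r) \<mapsto> (q + r, 1 - r) from (0, 0) yields (k div 2, k mod 2).\<close>
lemma rec_fn_div2_mod2:
  assumes a: "rec_fn a"
  shows "rec_fn (\<lambda>p x. a p x div 2)" and "rec_fn (\<lambda>p x. a p x mod 2)"
proof -
  define step :: "nat \<Rightarrow> nat" where
    "step y = prod_encode (fst (prod_decode y) + snd (prod_decode y), 1 - snd (prod_decode y))" for y
  have pow: "(step ^^ k) (prod_encode (0, 0)) = prod_encode (k div 2, k mod 2)" for k
  proof (induction k)
    case (Suc k) then show ?case by (simp add: step_def; presburger)
  qed simp
  have s: "rec_fn (\<lambda>p y. step y)"
    unfolding step_def by (intro rec_fn_pair rec_fn_add rec_fn_diff rec_fn_fst rec_fn_snd rec_fn_id rec_fn_const)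
  have "rec_fn (\<lambda>p x. fst (prod_decode ((step ^^ a p x) (prod_encode (0, 0)))))"
    by (intro rec_fn_fst rec_fn_iterate[OF s] rec_fn_const a)
  thus "rec_fn (\<lambda>p x. a p x div 2)" by (simp add: pow)
  have "rec_fn (\<lambda>p x. snd (prod_decode ((step ^^ a p x) (prod_encode (0, 0)))))"
    by (intro rec_fn_snd rec_fn_iterate[OF s] rec_fn_const a)
  thus "rec_fn (\<lambda>p x. a p x mod 2)" by (simp add: pow)
qed

lemmas rec_fn_div2 [intro] = rec_fn_div2_mod2(1)

lemma dec_pred_even [intro]: "rec_fn a \<Longrightarrow> dec_pred (\<lambda>p x. even (a p x))"
  using dec_pred_zero[OF rec_fn_div2_mod2(2)] by (simp add: even_iff_mod_2_eq_zero)

section \<open>Reading a play: the position automaton\<close>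

text \<open>A play of the game is read by an automaton (parameter N, the
  number of quantifier blocks).  State Index c: player 1 has played c zeros while
  naming an index (the index is completed by a one).  State Bit i: index i is named
  and player 2 plays a bit b.  State Block i b ks c: the numbers ks have been played
  in unary and the current block has c zeros so far.  State Final i b ks: all N
  blocks are complete; the remaining moves are irrelevant.\<close>

datatype pstate = Index nat | Bit nat | Block nat bool "nat list" nat | Final nat bool "nat list"

fun advance :: "nat \<Rightarrow> pstate \<Rightarrow> bool \<Rightarrow> pstate" where
  "advance N (Index c) a = (if a then Bit c else Index (Suc c))"
| "advance N (Bit i) a = (if N = 0 then Final i a [] else Block i a [] 0)"
| "advance N (Block i b ks c) a =
     (if a then (if Suc (length ks) = N then Final i b (ks @ [c]) else Block i b (ks @ [c]) 0)
      else Block i b ks (Suc c))"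
| "advance N (Final i b ks) a = Final i b ks"

definition parse :: "nat \<Rightarrow> bool list \<Rightarrow> pstate" where
  "parse N w = foldl (advance N) (Index 0) w"

fun nblocks :: "pstate \<Rightarrow> nat" where
  "nblocks (Block i b ks c) = length ks"
| "nblocks (Final i b ks) = length ks"
| "nblocks _ = 0"

fun is_final :: "pstate \<Rightarrow> bool" where
  "is_final (Final i b ks) = True"
| "is_final _ = False"

fun wf_state :: "nat \<Rightarrow> pstate \<Rightarrow> bool" where
  "wf_state N (Block i b ks c) = (length ks < N)"
| "wf_state N (Final i b ks) = (length ks = N)"
| "wf_state N _ = True"

text \<open>Player 1 names the index and plays the universally quantified numbers
  (blocks of even position), player 2 plays the bit and the existentially
  quantified numbers.\<close>
fun mover :: "pstate \<Rightarrow> player" where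
  "mover (Bit i) = P2"
| "mover (Block i b ks c) = (if even (length ks) then P1 else P2)"
| "mover _ = P1"

definition turn :: "nat \<Rightarrow> bool list \<Rightarrow> player" where
  "turn N w = mover (parse N w)"

definition state_at :: "nat \<Rightarrow> cantor \<Rightarrow> nat \<Rightarrow> pstate" where
  "state_at N x m = parse N (prefix_of x m)"

lemma prefix_of_Suc: "prefix_of x (Suc m) = prefix_of x m @ [x m]"
  by (simp add: prefix_of_def)

lemma length_prefix_of [simp]: "length (prefix_of x m) = m"
  by (simp add: prefix_of_def)

lemma state_at_0 [simp]: "state_at N x 0 = Index 0"
  by (simp add: state_at_def parse_def prefix_of_def)

lemma state_at_Suc: "state_at N x (Suc m) = advance N (state_at N x m) (x m)"
  by (simp add: state_at_def parse_def prefix_of_Suc)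

lemma wf_state_at: "wf_state N (state_at N x m)"
proof (induction m)
  case (Suc m) then show ?case by (cases "state_at N x m") (auto simp: state_at_Suc)
qed simp

lemma nblocks_mono: "m \<le> m' \<Longrightarrow> nblocks (state_at N x m) \<le> nblocks (state_at N x m')"
proof (induction m' rule: dec_induct)
  case (step k) then show ?case
    using wf_state_at[of N x k] by (cases "state_at N x k") (auto simp: state_at_Suc)
qed simp

lemma nblocks_le: "nblocks (state_at N x m) \<le> N"
  using wf_state_at[of N x m] by (cases "state_at N x m") auto

lemma Final_stays:
  assumes "state_at N x m = Final i b ks" "m \<le> m'" shows "state_at N x m' = Final i b ks"
  using assms(2) by (induction m' rule: dec_induct) (auto simp: assms(1) state_at_Suc)

lemma Final_unique:
  "state_at N x m = Final i b ks \<Longrightarrow> state_at N x m' = Final i' b' ks' \<Longrightarrow> i = i' \<and> b = b' \<and> ks = ks'"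
  using Final_stays[of N x m i b ks "max m m'"] Final_stays[of N x m' i' b' ks' "max m m'"] by auto

lemma eventually_const:
  fixes f :: "nat \<Rightarrow> nat"
  assumes "mono f" "\<And>m. f m \<le> B"
  shows "\<exists>m0 j. \<forall>m\<ge>m0. f m = j"
proof -
  have fin: "finite (range f)" using assms(2) by (meson finite_atMost finite_subset image_subsetI atMost_iff)
  obtain m0 where m0: "f m0 = Max (range f)" using Max_in[OF fin] by auto
  have "\<forall>m\<ge>m0. f m = f m0" using assms(1) m0 fin by (metis Max_ge le_antisym monoD rangeI)
  thus ?thesis by blast
qed

text \<open>A play that never completes the blocks and no longer completes any block
  stays in one block, where only zeros are played: this is how a player fails to
  finish a number.\<close>
lemma stuck_in_block:
  assumes never_final: "\<forall>m. \<not> is_final (state_at N x m)"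
    and const: "\<forall>m\<ge>m0. nblocks (state_at N x m) = length ks"
    and start: "state_at N x m0 = Block i b ks c"
  shows "state_at N x (m0 + t) = Block i b ks (c + t)"
proof (induction t)
  case (Suc t)
  have "x (m0 + t) = False"
  proof (rule ccontr)
    assume "x (m0 + t) \<noteq> False"
    hence "nblocks (state_at N x (Suc (m0 + t))) = Suc (length ks)"
      using Suc never_final[rule_format, of "Suc (m0 + t)"] by (auto simp: state_at_Suc split: if_splits)
    moreover have "nblocks (state_at N x (Suc (m0 + t))) = length ks" using const by simp
    ultimately show False by simp
  qed
  then show ?case using Suc by (simp add: state_at_Suc)
qed (simp add: start)

section \<open>General facts on games and on the difference hierarchy\<close>

fun play_prefix :: "(bool list \<Rightarrow> bool) \<Rightarrow> nat \<Rightarrow> bool list" where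
  "play_prefix \<tau> 0 = []"
| "play_prefix \<tau> (Suc k) = play_prefix \<tau> k @ [\<tau> (play_prefix \<tau> k)]"

definition play_of :: "(bool list \<Rightarrow> bool) \<Rightarrow> cantor" where
  "play_of \<tau> k = \<tau> (play_prefix \<tau> k)"

lemma prefix_play_of: "prefix_of (play_of \<tau>) k = play_prefix \<tau> k"
  by (induction k) (simp_all add: prefix_of_def prefix_of_Suc play_of_def)

text \<open>Letting player 1 follow s1 and player 2 follow s2 produces a play consistent
  with both; hence the two players cannot both have winning strategies.\<close>
definition merge :: "game \<Rightarrow> (bool list \<Rightarrow> bool) \<Rightarrow> (bool list \<Rightarrow> bool) \<Rightarrow> bool list \<Rightarrow> bool" where
  "merge G s1 s2 w = (if fst G w = P1 then s1 w else s2 w)"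

lemma consistent_merge1: "consistent G P1 s1 (play_of (merge G s1 s2))"
  by (simp add: consistent_def prefix_play_of) (simp add: play_of_def merge_def)

lemma consistent_merge2: "consistent G P2 s2 (play_of (merge G s1 s2))"
  by (auto simp: consistent_def prefix_play_of play_of_def merge_def)

lemma not_both_winning: "winning G P1 s1 \<Longrightarrow> winning G P2 s2 \<Longrightarrow> False"
  using consistent_merge1[of G s1 s2] consistent_merge2[of G s2 s1]
  unfolding winning_def wins_def by auto

lemma dset_least:
  assumes "x \<in> U \<beta>" "\<beta> < n" "\<And>\<gamma>. \<gamma> < \<beta> \<Longrightarrow> x \<notin> U \<gamma>"
  shows "x \<in> dset n U \<longleftrightarrow> \<beta> mod 2 \<noteq> n mod 2"
proof -
  have "(LEAST \<gamma>. x \<in> U \<gamma>) = \<beta>"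
    by (rule Least_equality) (use assms in \<open>auto simp: not_less[symmetric]\<close>)
  thus ?thesis using assms by (auto simp: dset_def)
qed

lemma dset_none: "(\<And>\<beta>. \<beta> < n \<Longrightarrow> x \<notin> U \<beta>) \<Longrightarrow> x \<notin> dset n U"
  by (auto simp: dset_def)

lemma alt_Suc:
  "alt b (Suc m) P ks = (if b then (\<forall>k. alt False m P (ks @ [k])) else (\<exists>k. alt True m P (ks @ [k])))"
  by (cases b) auto

section \<open>The game G(Q)\<close>

text \<open>An instance is a family Q i b of binary sequences.  Player 2 should win G(Q)
  exactly when every index i admits a bit b with phi (Suc N) (Q i b).\<close>

locale quantifier_game =
  fixes N :: nat and Q :: "nat \<Rightarrow> bool \<Rightarrow> cantor"
begin

text \<open>The open sets defining the winning set of player 1: Witnessed collects the plays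
  that complete all N blocks with a value kn for the innermost quantifier that
  refutes it; Reached k the plays that complete at least k blocks.\<close>
definition Reached :: "nat \<Rightarrow> cantor set" where
  "Reached k = {x. \<exists>m. k \<le> nblocks (state_at N x m)}"

definition Witnessed :: "cantor set" where
  "Witnessed = {x. \<exists>m i b ks kn. state_at N x m = Final i b ks \<and> Q i b (list_encode (ks @ [kn])) = even (Suc N)}"

text \<open>The winning set of player 1 is the D_(N+1) set given by U_0 = Witnessed and
  U_beta = Reached (N + 1 - beta): a play that completed j blocks first enters
  U_(N+1-j), whose parity relative to N + 1 is that of j.\<close>
definition U :: "nat \<Rightarrow> cantor set" where
  "U \<beta> = (if \<beta> = 0 then Witnessed else if \<beta> < Suc N then Reached (Suc N - \<beta>) else {})"

definition win_set :: "cantor set" where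
  "win_set = dset (Suc N) U"

definition game :: game where
  "game = (turn N, win_set)"

text \<open>A play that completes all blocks is won by player 1 iff the innermost
  quantifier fails for the numbers played.\<close>
lemma win_set_Final:
  assumes final: "state_at N x m = Final i b ks"
  shows "x \<in> win_set \<longleftrightarrow> ((\<exists>kn. Q i b (list_encode (ks @ [kn])) = even (Suc N)) = odd (Suc N))"
proof -
  have len: "length ks = N" using wf_state_at[of N x m] final by simp
  have W: "x \<in> Witnessed \<longleftrightarrow> (\<exists>kn. Q i b (list_encode (ks @ [kn])) = even (Suc N))"
    using Final_unique[OF final] final unfolding Witnessed_def by blast
  have R: "x \<in> Reached N" unfolding Reached_def using final len by (intro CollectI exI[of _ m]) simp
  show ?thesis
  proof (cases "x \<in> Witnessed")
    case True
    then show ?thesis using W dset_least[of x U 0 "Suc N"] by (simp add: win_set_def U_def mod2_eq_if)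
  next
    case False
    show ?thesis
    proof (cases "N = 0")
      case True
      then have "x \<notin> win_set"
        unfolding win_set_def
        by (intro dset_none) (metis True U_def \<open>x \<notin> Witnessed\<close> less_Suc0)
      then show ?thesis using \<open>x \<notin> Witnessed\<close> W True by simp
    next
      case False
      then have "x \<in> win_set \<longleftrightarrow> 1 mod 2 \<noteq> Suc N mod 2"
        unfolding win_set_def using \<open>x \<notin> Witnessed\<close> R by (intro dset_least) (auto simp: U_def)
      then show ?thesis using \<open>x \<notin> Witnessed\<close> W by (simp add: mod2_eq_if)
    qed
  qed
qed

text \<open>A play that never completes all blocks is won by player 1 iff it gets stuck in
  a block of player 2, i.e. after an odd number of completed blocks.\<close>
lemma win_set_stuck:
  assumes never_final: "\<forall>m. \<not> is_final (state_at N x m)"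
    and const: "\<forall>m\<ge>m0. nblocks (state_at N x m) = j"
  shows "x \<in> win_set \<longleftrightarrow> odd j"
proof -
  have bound: "nblocks (state_at N x m) \<le> j" for m
    using nblocks_mono[of m "max m m0" N x] const by simp
  have jN: "j \<le> N" using const nblocks_le[of N x m0] by simp
  have "x \<notin> Witnessed"
  proof
    assume "x \<in> Witnessed"
    then obtain m i b ks where "state_at N x m = Final i b ks" unfolding Witnessed_def by blast
    with never_final show False by (metis is_final.simps(1))
  qed
  moreover have "x \<in> Reached k \<longleftrightarrow> k \<le> j" for k
    unfolding Reached_def using bound const by (auto intro: order_trans)
  ultimately have U: "x \<in> U \<beta> \<longleftrightarrow> 0 < \<beta> \<and> \<beta> < Suc N \<and> Suc N - \<beta> \<le> j" for \<beta>
    unfolding U_def by simp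
  show ?thesis
  proof (cases "j = 0")
    case True
    then show ?thesis using dset_none[of "Suc N" x U] U by (simp add: win_set_def)
  next
    case False
    have "x \<in> win_set \<longleftrightarrow> (Suc N - j) mod 2 \<noteq> Suc N mod 2"
      unfolding win_set_def using False jN by (intro dset_least) (auto simp: U)
    moreover have "(Suc N - j) mod 2 \<noteq> Suc N mod 2 \<longleftrightarrow> odd j"
      using jN by (auto simp: mod2_eq_if)
    ultimately show ?thesis by simp
  qed
qed

text \<open>The statement that remains to be decided once the numbers ks have been
  played: phi (Suc N) (Q i b) with its first quantifiers instantiated by ks.\<close>
definition residual :: "nat \<Rightarrow> bool \<Rightarrow> nat list \<Rightarrow> bool" where
  "residual i b ks = alt (even (length ks)) (Suc N - length ks) (\<lambda>ks. Q i b (list_encode ks)) ks"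

lemma phi_residual: "phi (Suc N) (Q i b) = residual i b []"
  by (simp add: phi_def residual_def)

lemma residual_step: "length ks \<le> N \<Longrightarrow>
  residual i b ks = (if even (length ks) then (\<forall>k. residual i b (ks @ [k])) else (\<exists>k. residual i b (ks @ [k])))"
  unfolding residual_def by (simp add: Suc_diff_le alt_Suc)

lemma residual_last: "length ks = N \<Longrightarrow>
  residual i b ks = (if even N then (\<forall>k. Q i b (list_encode (ks @ [k]))) else (\<exists>k. Q i b (list_encode (ks @ [k]))))"
  by (simp add: residual_step) (simp add: residual_def)

text \<open>The number that the player defending the value pol of the residual statement
  plays when it is his turn (a witness or a counterexample).\<close>
definition good_move :: "bool \<Rightarrow> nat \<Rightarrow> bool \<Rightarrow> nat list \<Rightarrow> nat" where
  "good_move pol i b ks = (SOME k. residual i b (ks @ [k]) = pol)"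

text \<open>Invariant of a play in which the player defending pol plays his good moves:
  the residual statement keeps the value pol, and that player has not yet
  overshot his current number.\<close>
definition tracking :: "bool \<Rightarrow> nat \<Rightarrow> bool \<Rightarrow> pstate \<Rightarrow> bool" where
  "tracking pol i b s \<longleftrightarrow>
     (\<exists>ks c. s = Block i b ks c \<and> residual i b ks = pol \<and>
        (even (length ks) \<noteq> pol \<longrightarrow> c \<le> good_move pol i b ks))
   \<or> (\<exists>ks. s = Final i b ks \<and> residual i b ks = pol)"

lemma tracking_start: assumes "residual i b [] = pol" shows "tracking pol i b (advance N (Bit i) b)"
  using assms by (auto simp: tracking_def)

lemma tracking_advance:
  assumes tr: "tracking pol i b s" and wf: "wf_state N s"
    and move: "\<And>ks c. s = Block i b ks c \<Longrightarrow> even (length ks) \<noteq> pol \<Longrightarrow> a = (c = good_move pol i b ks)"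
  shows "tracking pol i b (advance N s a)"
  using tr[unfolded tracking_def]
proof (elim disjE exE conjE)
  fix ks c assume s: "s = Block i b ks c" and res: "residual i b ks = pol"
    and bound: "even (length ks) \<noteq> pol \<longrightarrow> c \<le> good_move pol i b ks"
  have step: "residual i b ks = (if even (length ks) then (\<forall>k. residual i b (ks @ [k])) else (\<exists>k. residual i b (ks @ [k])))"
    using wf s by (intro residual_step) simp
  show ?thesis
  proof (cases "even (length ks) \<noteq> pol")
    case True
    have "\<exists>k. residual i b (ks @ [k]) = pol" using step res True by (cases pol) auto
    hence good: "residual i b (ks @ [good_move pol i b ks]) = pol"
      unfolding good_move_def by (rule someI_ex)
    show ?thesis using move[OF s True] good s res bound True by (auto simp: tracking_def)
  next
    case False
    have "residual i b (ks @ [k]) = pol" for k using step res False by (cases pol) auto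
    then show ?thesis using s res False by (auto simp: tracking_def)
  qed
qed (auto simp: tracking_def)

lemma consistent_move:
  "consistent game pl \<sigma> x \<Longrightarrow> mover (state_at N x k) = pl \<Longrightarrow> x k = \<sigma> (prefix_of x k)"
  by (simp add: consistent_def game_def turn_def state_at_def)

lemma outcome_Final:
  assumes final: "state_at N x m = Final i b ks" and res: "residual i b ks = pol"
  shows "x \<in> win_set \<longleftrightarrow> \<not> pol"
proof -
  have "length ks = N" using wf_state_at[of N x m] final by simp
  then show ?thesis using win_set_Final[OF final] residual_last[of ks i b] res by (cases pol) auto
qed

text \<open>The quantifier phase: if from some point on the play is tracked for pol and
  the player defending pol (player 2 for true, player 1 for false) plays his good
  moves, then this player wins.  Either the blocks are completed, and the innermost
  quantifier decides; or the play gets stuck in a block, which cannot be one of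
  the defending player since he always completes his number.\<close>
lemma quantifier_phase:
  assumes cons: "consistent game (if pol then P2 else P1) \<sigma> x"
    and strategy: "\<And>w i' b' ks c. parse N w = Block i' b' ks c \<Longrightarrow> even (length ks) \<noteq> pol \<Longrightarrow>
                     \<sigma> w = (c = good_move pol i' b' ks)"
    and start: "tracking pol i b (state_at N x m1)"
  shows "x \<in> win_set \<longleftrightarrow> \<not> pol"
proof -
  have inv: "tracking pol i b (state_at N x m)" if "m1 \<le> m" for m
    using that
  proof (induction m rule: dec_induct)
    case (step m)
    have "x m = (c = good_move pol i b ks)"
      if "state_at N x m = Block i b ks c" "even (length ks) \<noteq> pol" for ks c
      using consistent_move[OF cons] strategy that by (simp add: state_at_def)
    then show ?case unfolding state_at_Suc using step.IH wf_state_at by (intro tracking_advance)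
  qed (rule start)
  show ?thesis
  proof (cases "\<exists>m. is_final (state_at N x m)")
    case True
    then obtain m2 i2 b2 ks2 where "state_at N x m2 = Final i2 b2 ks2" by (metis is_final.elims(2))
    then have final: "state_at N x (max m1 m2) = Final i2 b2 ks2" by (rule Final_stays) simp
    with inv[of "max m1 m2"] have "state_at N x (max m1 m2) = Final i b ks2" "residual i b ks2 = pol"
      unfolding tracking_def by auto
    then show ?thesis by (rule outcome_Final)
  next
    case False
    then have never_final: "\<forall>m. \<not> is_final (state_at N x m)" by blast
    obtain m0 j where "\<forall>m\<ge>m0. nblocks (state_at N x m) = j"
      using eventually_const[of "\<lambda>m. nblocks (state_at N x m)" N] nblocks_mono nblocks_le
      by (metis monoI)
    then have const: "\<forall>m\<ge>max m0 m1. nblocks (state_at N x m) = j" by simp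
    obtain ks c where s3: "state_at N x (max m0 m1) = Block i b ks c"
      using inv[of "max m0 m1"] never_final unfolding tracking_def by (metis is_final.simps(1) max.cobounded2)
    have len: "length ks = j" using const s3 by (metis nblocks.simps(1) order_refl)
    have "even j = pol"
    proof (rule ccontr)
      assume "even j \<noteq> pol"
      let ?t = "Suc (good_move pol i b ks)"
      have "state_at N x (max m0 m1 + ?t) = Block i b ks (c + ?t)"
        using stuck_in_block[OF never_final _ s3] const len by blast
      moreover have "m1 \<le> max m0 m1 + ?t" by (metis le_add1 max.cobounded2 order_trans)
      ultimately show False using inv[of "max m0 m1 + ?t"] \<open>even j \<noteq> pol\<close> len
        by (simp add: tracking_def)
    qed
    then show ?thesis using win_set_stuck[OF never_final const] by auto
  qed
qed

text \<open>Player 1 refutes index i: he names i and then plays counterexamples.\<close>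
definition refuter :: "nat \<Rightarrow> bool list \<Rightarrow> bool" where
  "refuter i w = (case parse N w of Index c \<Rightarrow> c = i | Block i' b ks c \<Rightarrow> c = good_move False i' b ks | _ \<Rightarrow> False)"

text \<open>Player 2 defends: he answers a bit making the statement true, then plays witnesses.\<close>
definition good_bit :: "nat \<Rightarrow> bool" where
  "good_bit i = (SOME b. phi (Suc N) (Q i b))"

definition defender :: "bool list \<Rightarrow> bool" where
  "defender w = (case parse N w of Bit i \<Rightarrow> good_bit i | Block i b ks c \<Rightarrow> c = good_move True i b ks | _ \<Rightarrow> False)"

lemma refuter_Index:
  assumes cons: "consistent game P1 (refuter i) x" and "k \<le> i"
  shows "state_at N x k = Index k \<and> x k = (k = i)"
  using assms(2)
proof (induction k)
  case 0 then show ?case using consistent_move[OF cons, of 0] by (simp add: refuter_def flip: state_at_def)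
next
  case (Suc k)
  hence "state_at N x (Suc k) = Index (Suc k)" by (simp add: state_at_Suc)
  then show ?case using consistent_move[OF cons, of "Suc k"] by (simp add: refuter_def flip: state_at_def)
qed

lemma refuter_names_index:
  assumes cons: "consistent game P1 (refuter i) x"
  shows "prefix_of x (Suc i) = replicate i False @ [True]" and "state_at N x (Suc i) = Bit i"
proof -
  show "prefix_of x (Suc i) = replicate i False @ [True]"
    unfolding prefix_of_def by (rule nth_equalityI) (auto simp: refuter_Index[OF cons] nth_append)
  show "state_at N x (Suc i) = Bit i" using refuter_Index[OF cons, of i] by (simp add: state_at_Suc)
qed

lemma refuter_wins:
  assumes cons: "consistent game P1 (refuter i) x" and false: "\<not> phi (Suc N) (Q i (x (Suc i)))"
  shows "x \<in> win_set"
proof -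
  have "state_at N x (Suc (Suc i)) = advance N (Bit i) (x (Suc i))"
    by (simp only: state_at_Suc[of N x "Suc i"] refuter_names_index(2)[OF cons])
  then have "tracking False i (x (Suc i)) (state_at N x (Suc (Suc i)))"
    using tracking_start false phi_residual by metis
  then have "x \<in> win_set \<longleftrightarrow> \<not> False"
    using cons by (intro quantifier_phase[of False "refuter i"]) (auto simp: refuter_def)
  then show ?thesis by simp
qed

text \<open>If every index has a good bit, the defender wins: either player 1 names an
  index and the defender plays witnesses, or player 1 never completes an index.\<close>
lemma defender_wins:
  assumes total: "\<forall>i. \<exists>b. phi (Suc N) (Q i b)" and cons: "consistent game P2 defender x"
  shows "x \<notin> win_set"
proof (cases "\<exists>m i. state_at N x m = Bit i")
  case True
  then obtain m i where s: "state_at N x m = Bit i" by blast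
  have "x m = good_bit i" using consistent_move[OF cons] s by (simp add: defender_def flip: state_at_def)
  moreover have "phi (Suc N) (Q i (good_bit i))" unfolding good_bit_def using total by (metis someI_ex)
  moreover have "state_at N x (Suc m) = advance N (Bit i) (x m)" by (simp only: state_at_Suc s)
  ultimately have "tracking True i (x m) (state_at N x (Suc m))"
    using tracking_start phi_residual by metis
  then have "x \<in> win_set \<longleftrightarrow> \<not> True"
    using cons by (intro quantifier_phase[of True defender]) (auto simp: defender_def)
  then show ?thesis by simp
next
  case False
  have index: "state_at N x m = Index m" for m
  proof (induction m)
    case (Suc m)
    have "state_at N x (Suc m) \<noteq> Bit m" using False by blast
    then show ?case using Suc by (cases "x m") (auto simp: state_at_Suc)
  qed simp
  have "x \<in> win_set \<longleftrightarrow> odd (0::nat)" by (rule win_set_stuck[of x 0]) (simp_all add: index)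
  then show ?thesis by simp
qed

lemma defender_winning: "\<forall>i. \<exists>b. phi (Suc N) (Q i b) \<Longrightarrow> winning game P2 defender"
  unfolding winning_def wins_def using defender_wins by (auto simp: game_def)

lemma refuter_winning: "\<forall>b. \<not> phi (Suc N) (Q i b) \<Longrightarrow> winning game P1 (refuter i)"
  unfolding winning_def wins_def using refuter_wins by (auto simp: game_def)

text \<open>The key property for LLPO: when every index has a good bit, any profile with a
  winning component answers a good bit to the word 0^i 1 naming index i.  Otherwise
  the refuter for i, played against it, would beat the (necessarily winning)
  strategy of player 2.\<close>
lemma profile_answers:
  assumes total: "\<forall>i. \<exists>b. phi (Suc N) (Q i b)" and det: "\<sigma> \<in> Det game"
  shows "phi (Suc N) (Q i (\<sigma> (replicate i False @ [True])))"
proof (rule ccontr)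
  assume false: "\<not> ?thesis"
  have winning2: "winning game P2 \<sigma>"
    using det not_both_winning defender_winning[OF total] unfolding Det_def by blast
  let ?x = "play_of (merge game (refuter i) \<sigma>)"
  have cons1: "consistent game P1 (refuter i) ?x" by (rule consistent_merge1)
  have "mover (state_at N ?x (Suc i)) = P2" using refuter_names_index(2)[OF cons1] by simp
  hence "?x (Suc i) = \<sigma> (replicate i False @ [True])"
    using consistent_move[OF consistent_merge2] refuter_names_index(1)[OF cons1] by metis
  hence "?x \<in> win_set" using refuter_wins[OF cons1] false by simp
  moreover have "?x \<notin> win_set"
    using winning2 consistent_merge2 unfolding winning_def wins_def game_def by auto
  ultimately show False by simp
qed

lemma Win_game:
  "Win game = (if \<forall>i. \<exists>b. phi (Suc N) (Q i b) then {P2} else {P1})"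
proof (cases "\<forall>i. \<exists>b. phi (Suc N) (Q i b)")
  case True
  then have "P2 \<in> Win game" using defender_winning unfolding Win_def by blast
  moreover from this have "P1 \<notin> Win game" using not_both_winning unfolding Win_def by blast
  ultimately show ?thesis using True by (auto; metis player.exhaust)
next
  case False
  then have "P1 \<in> Win game" using refuter_winning unfolding Win_def by blast
  moreover from this have "P2 \<notin> Win game" using not_both_winning unfolding Win_def by blast
  ultimately show ?thesis using False by (auto; metis player.exhaust)
qed

end

section \<open>Computing a name of the game\<close>

fun wdec :: "nat \<Rightarrow> bool list" where
  "wdec 0 = []"
| "wdec (Suc j) = odd j # wdec (j div 2)"

lemma wcode_wdec [simp]: "wcode (wdec j) = j"
  by (induction j rule: wdec.induct) auto

lemma wdec_wcode [simp]: "wdec (wcode w) = w"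
proof (induction w)
  case (Cons b w) then show ?case by (cases b) auto
qed simp

lemma length_le_wcode: "length w \<le> wcode w"
  by (induction w) auto

lemma length_le_list_encode: "length l \<le> list_encode l"
proof (induction l)
  case (Cons a l) then show ?case using le_prod_encode_2[of "list_encode l" a] by simp
qed simp

lemma open_of_words:
  assumes "\<And>j. (\<exists>e. r e = Suc j) \<longleftrightarrow> P (wdec j)"
  shows "open_of r = {x. \<exists>m. P (prefix_of x m)}"
proof (intro set_eqI iffI)
  fix x assume "x \<in> open_of r"
  then obtain i w where "r i = Suc (wcode w)" "prefix_of x (length w) = w" unfolding open_of_def by blast
  then show "x \<in> {x. \<exists>m. P (prefix_of x m)}" using assms[of "wcode w"] by (metis mem_Collect_eq wdec_wcode)
next
  fix x assume "x \<in> {x. \<exists>m. P (prefix_of x m)}"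
  then obtain m where "P (prefix_of x m)" by blast
  then obtain e where "r e = Suc (wcode (prefix_of x m))" using assms[of "wcode (prefix_of x m)"] by auto
  then show "x \<in> open_of r" unfolding open_of_def by (intro CollectI exI conjI) auto
qed

definition bit_nat :: "bool \<Rightarrow> nat" where
  "bit_nat b = (if b then 1 else 0)"

definition tuple :: "nat \<Rightarrow> nat \<Rightarrow> nat \<Rightarrow> nat \<Rightarrow> nat \<Rightarrow> nat \<Rightarrow> nat" where
  "tuple t i b r l c = prod_encode (t, prod_encode (i, prod_encode (b, prod_encode (r, prod_encode (l, c)))))"

text \<open>The completed numbers ks are stored in reverse, so that a number is added by
  one pairing; their count is stored separately.\<close>
fun enc_state :: "pstate \<Rightarrow> nat" where
  "enc_state (Index c) = prod_encode (0, c)"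
| "enc_state (Bit i) = prod_encode (1, i)"
| "enc_state (Block i b ks c) = tuple 2 i (bit_nat b) (list_encode (rev ks)) (length ks) c"
| "enc_state (Final i b ks) = tuple 3 i (bit_nat b) (list_encode (rev ks)) (length ks) 0"

definition tag :: "nat \<Rightarrow> nat" where "tag s = fst (prod_decode s)"
definition body :: "nat \<Rightarrow> nat" where "body s = snd (prod_decode s)"
definition fld_index :: "nat \<Rightarrow> nat" where "fld_index s = fst (prod_decode (body s))"
definition fld_bit :: "nat \<Rightarrow> nat" where "fld_bit s = fst (prod_decode (snd (prod_decode (body s))))"
definition fld_rev :: "nat \<Rightarrow> nat" where
  "fld_rev s = fst (prod_decode (snd (prod_decode (snd (prod_decode (body s))))))"
definition fld_len :: "nat \<Rightarrow> nat" where
  "fld_len s = fst (prod_decode (snd (prod_decode (snd (prod_decode (snd (prod_decode (body s))))))))"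
definition fld_count :: "nat \<Rightarrow> nat" where
  "fld_count s = snd (prod_decode (snd (prod_decode (snd (prod_decode (snd (prod_decode (body s))))))))"

lemmas field_defs = tag_def body_def fld_index_def fld_bit_def fld_rev_def fld_len_def fld_count_def

definition enc_advance :: "nat \<Rightarrow> nat \<Rightarrow> nat \<Rightarrow> nat" where
  "enc_advance N s a =
    (if tag s = 0 then (if a = 0 then prod_encode (0, Suc (body s)) else prod_encode (1, body s))
     else if tag s = 1 then (if N = 0 then tuple 3 (body s) a 0 0 0 else tuple 2 (body s) a 0 0 0)
     else if tag s = 2 then
       (if a = 0 then tuple 2 (fld_index s) (fld_bit s) (fld_rev s) (fld_len s) (Suc (fld_count s))
        else tuple (if Suc (fld_len s) = N then 3 else 2) (fld_index s) (fld_bit s)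
               (Suc (prod_encode (fld_count s, fld_rev s))) (Suc (fld_len s)) 0)
     else s)"

lemma enc_advance_correct: "enc_advance N (enc_state s) (bit_nat a) = enc_state (advance N s a)"
  by (cases s) (auto simp: enc_advance_def field_defs tuple_def bit_nat_def)

text \<open>Running the automaton on the word coded by j: the pair (state, remaining code)
  is advanced by one letter per step, and j steps suffice.\<close>
definition parse_step :: "nat \<Rightarrow> nat \<Rightarrow> nat" where
  "parse_step N y = (if snd (prod_decode y) = 0 then y
     else prod_encode (enc_advance N (fst (prod_decode y)) (if even (snd (prod_decode y)) then 1 else 0),
                       (snd (prod_decode y) - 1) div 2))"

definition enc_parse :: "nat \<Rightarrow> nat \<Rightarrow> nat" where
  "enc_parse N j = fst (prod_decode ((parse_step N ^^ j) (prod_encode (prod_encode (0, 0), j))))"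

lemma parse_step_run: "length w \<le> f \<Longrightarrow>
  (parse_step N ^^ f) (prod_encode (enc_state s, wcode w)) = prod_encode (enc_state (foldl (advance N) s w), 0)"
proof (induction w arbitrary: s f)
  case Nil
  have "(parse_step N ^^ f) (prod_encode (e, 0)) = prod_encode (e, 0)" for e
    by (induction f) (auto simp: parse_step_def)
  then show ?case by simp
next
  case (Cons b w)
  then obtain f' where f: "f = Suc f'" and lf: "length w \<le> f'" by (cases f) auto
  have "wcode (b # w) \<noteq> 0" by simp
  moreover have "(if even (wcode (b # w)) then 1 else 0) = bit_nat b" by (cases b) (auto simp: bit_nat_def)
  moreover have "(wcode (b # w) - 1) div 2 = wcode w" by (cases b) auto
  ultimately have "parse_step N (prod_encode (enc_state s, wcode (b # w))) = prod_encode (enc_state (advance N s b), wcode w)"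
    unfolding parse_step_def by (simp only: prod_encode_inverse fst_conv snd_conv if_False enc_advance_correct)
  then show ?case using Cons.IH[OF lf] f by (simp add: funpow_Suc_right del: funpow.simps)
qed

lemma enc_parse_correct: "enc_parse N j = enc_state (parse N (wdec j))"
  using parse_step_run[OF length_le_wcode, of "wdec j" N "Index 0"] by (simp add: enc_parse_def parse_def)

definition rev_step :: "nat \<Rightarrow> nat" where
  "rev_step y = (if snd (prod_decode y) = 0 then y
     else prod_encode (Suc (prod_encode (fst (prod_decode (snd (prod_decode y) - 1)), fst (prod_decode y))),
                       snd (prod_decode (snd (prod_decode y) - 1))))"

definition enc_rev :: "nat \<Rightarrow> nat" where
  "enc_rev r = fst (prod_decode ((rev_step ^^ r) (prod_encode (0, r))))"

lemma rev_step_run: "length l \<le> f \<Longrightarrow>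
  (rev_step ^^ f) (prod_encode (list_encode acc, list_encode l)) = prod_encode (list_encode (rev l @ acc), 0)"
proof (induction l arbitrary: acc f)
  case Nil
  have "(rev_step ^^ f) (prod_encode (e, 0)) = prod_encode (e, 0)" for e
    by (induction f) (auto simp: rev_step_def)
  then show ?case by simp
next
  case (Cons a l)
  then obtain f' where f: "f = Suc f'" and lf: "length l \<le> f'" by (cases f) auto
  have "rev_step (prod_encode (list_encode acc, list_encode (a # l))) = prod_encode (list_encode (a # acc), list_encode l)"
    by (simp add: rev_step_def)
  then show ?case using Cons.IH[OF lf, of "a # acc"] f by (simp add: funpow_Suc_right del: funpow.simps)
qed

lemma enc_rev_correct: "enc_rev (list_encode l) = list_encode (rev l)"
  using rev_step_run[OF length_le_list_encode, of l "[]"] by (simp add: enc_rev_def)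

lemma rec_fn_enc_parse: "rec_fn a \<Longrightarrow> rec_fn (\<lambda>p x. enc_parse N (a p x))"
proof -
  assume a: "rec_fn a"
  have "rec_fn (\<lambda>p y. parse_step N y)"
    unfolding parse_step_def enc_advance_def field_defs tuple_def
    by (intro rec_fn_if rec_fn_pair rec_fn_Suc rec_fn_div2 rec_fn_diff rec_fn_fst rec_fn_snd
        dec_pred_eq dec_pred_even rec_fn_const rec_fn_id)
  then show ?thesis
    unfolding enc_parse_def by (intro rec_fn_fst rec_fn_iterate rec_fn_pair rec_fn_const a)
qed

lemma rec_fn_enc_rev: "rec_fn a \<Longrightarrow> rec_fn (\<lambda>p x. enc_rev (a p x))"
proof -
  assume a: "rec_fn a"
  have "rec_fn (\<lambda>p y. rev_step y)"
    unfolding rev_step_def by (intro rec_fn_if rec_fn_pair rec_fn_Suc rec_fn_diff rec_fn_fst rec_fn_snd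
        dec_pred_eq rec_fn_const rec_fn_id)
  then show ?thesis
    unfolding enc_rev_def by (intro rec_fn_fst rec_fn_iterate rec_fn_pair rec_fn_const a)
qed

text \<open>An instance Q is accessed through a query function qa: bit m of Q i b is
  read as qa p (i, b, m) = 1 from the input name p.\<close>
definition inst_of :: "(baire \<Rightarrow> nat \<Rightarrow> nat) \<Rightarrow> baire \<Rightarrow> nat \<Rightarrow> bool \<Rightarrow> cantor" where
  "inst_of qa p i b m = (qa p (prod_encode (i, prod_encode (bit_nat b, m))) = 1)"

definition enc_turn :: "nat \<Rightarrow> nat" where
  "enc_turn s = (if tag s = 1 \<or> (tag s = 2 \<and> odd (fld_len s)) then 2 else 1)"

definition enc_blocks :: "nat \<Rightarrow> nat" where
  "enc_blocks s = (if tag s = 2 \<or> tag s = 3 then fld_len s else 0)"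

lemma enc_turn_correct: "enc_turn (enc_state s) = (if mover s = P1 then 1 else 2)"
  by (cases s) (auto simp: enc_turn_def field_defs tuple_def)

lemma enc_blocks_correct: "enc_blocks (enc_state s) = nblocks s"
  by (cases s) (auto simp: enc_blocks_def field_defs tuple_def)

text \<open>Enumeration of Witnessed: entry (w, kn) lists the word w if it leads to a final
  state (i, b, ks) at which kn refutes the innermost quantifier.\<close>
definition witness_enum :: "nat \<Rightarrow> (baire \<Rightarrow> nat \<Rightarrow> nat) \<Rightarrow> baire \<Rightarrow> nat \<Rightarrow> nat" where
  "witness_enum N qa p e =
    (let w = fst (prod_decode e); kn = snd (prod_decode e); s = enc_parse N w in
     if tag s = 3 \<and> (qa p (prod_encode (fld_index s, prod_encode (fld_bit s,
             enc_rev (Suc (prod_encode (kn, fld_rev s)))))) = 1) = even (Suc N)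
     then Suc w else 0)"

definition reached_enum :: "nat \<Rightarrow> nat \<Rightarrow> nat \<Rightarrow> nat" where
  "reached_enum N k w = (if k \<le> enc_blocks (enc_parse N w) then Suc w else 0)"

definition U_enum :: "nat \<Rightarrow> (baire \<Rightarrow> nat \<Rightarrow> nat) \<Rightarrow> baire \<Rightarrow> nat \<Rightarrow> nat" where
  "U_enum N qa p e = (let \<beta> = fst (prod_decode e); j = snd (prod_decode e) in
     if \<beta> = 0 then witness_enum N qa p j else if \<beta> < Suc N then reached_enum N (Suc N - \<beta>) j else 0)"

definition game_name :: "nat \<Rightarrow> (baire \<Rightarrow> nat \<Rightarrow> nat) \<Rightarrow> baire \<Rightarrow> nat \<Rightarrow> nat" where
  "game_name N qa p k = (if even k then enc_turn (enc_parse N (k div 2)) else U_enum N qa p (k div 2))"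

lemma rec_fn_game_name:
  assumes qa: "rec_fn qa" shows "rec_fn (game_name N qa)"
proof -
  have query: "rec_fn g \<Longrightarrow> rec_fn (\<lambda>p x. qa p (g p x))" for g using rec_fn_comp[OF qa] .
  have "rec_fn (\<lambda>p k. game_name N qa p k)"
    unfolding game_name_def U_enum_def witness_enum_def reached_enum_def enc_turn_def enc_blocks_def
      field_defs Let_def
    by (intro rec_fn_if query rec_fn_pair rec_fn_Suc rec_fn_enc_rev rec_fn_enc_parse rec_fn_div2
        rec_fn_diff rec_fn_fst rec_fn_snd dec_pred_conj dec_pred_disj dec_pred_iff dec_pred_not
        dec_pred_eq dec_pred_le dec_pred_less dec_pred_even dec_pred_const rec_fn_const rec_fn_id)
  then show ?thesis by simp
qed

lemma open_witness_enum:
  "open_of (witness_enum N qa p) = quantifier_game.Witnessed N (inst_of qa p)"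
proof -
  have "(\<exists>e. witness_enum N qa p e = Suc j) \<longleftrightarrow>
        (\<exists>i b ks kn. parse N (wdec j) = Final i b ks \<and> inst_of qa p i b (list_encode (ks @ [kn])) = even (Suc N))"
    for j
  proof -
    have "witness_enum N qa p (prod_encode (j, kn)) =
      (if \<exists>i b ks. parse N (wdec j) = Final i b ks \<and> inst_of qa p i b (list_encode (ks @ [kn])) = even (Suc N)
       then Suc j else 0)" for kn
      using enc_rev_correct[of "kn # rev ks" for ks]
      by (cases "parse N (wdec j)")
        (auto simp: witness_enum_def enc_parse_correct field_defs tuple_def inst_of_def bit_nat_def)
    moreover have "witness_enum N qa p e \<in> {0, Suc (fst (prod_decode e))}" for e
      by (simp add: witness_enum_def Let_def)
    ultimately show ?thesis by (metis insert_iff nat.distinct(1) nat.inject prod_decode_inverse prod.collapse singletonD)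
  qed
  then show ?thesis
    by (subst open_of_words) (auto simp: quantifier_game.Witnessed_def state_at_def)
qed

lemma open_reached_enum:
  "open_of (reached_enum N k) = quantifier_game.Reached N k"
  by (subst open_of_words[where P = "\<lambda>w. k \<le> nblocks (parse N w)"])
    (auto simp: reached_enum_def enc_parse_correct enc_blocks_correct quantifier_game.Reached_def
      state_at_def split: if_splits)

lemma game_name_correct:
  "rep_game (Suc N) (game_name N qa p) = Some (quantifier_game.game N (inst_of qa p))"
proof -
  have turn: "rep_turn (\<lambda>k. game_name N qa p (2 * k)) = Some (turn N)"
    unfolding rep_turn_def game_name_def
    by (auto simp: enc_parse_correct enc_turn_correct turn_def intro!: ext) (metis player.exhaust)
  have "open_of (\<lambda>j. game_name N qa p (2 * prod_encode (\<beta>, j) + 1)) = quantifier_game.U N (inst_of qa p) \<beta>" for \<beta>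
    by (simp add: game_name_def U_enum_def quantifier_game.U_def open_witness_enum
        flip: open_reached_enum) (simp add: open_of_def)
  then have "rep_D (Suc N) (\<lambda>k. game_name N qa p (2 * k + 1)) = Some (quantifier_game.win_set N (inst_of qa p))"
    unfolding rep_D_def quantifier_game.win_set_def by simp
  then show ?thesis using turn unfolding rep_game_def quantifier_game.game_def by simp
qed

section \<open>The reductions\<close>

lemma weihrauch_leI:
  assumes "rec_fn K" "rec_fn H"
    and "\<And>G p x. realizer dZ dW g G \<Longrightarrow> dX p = Some x \<Longrightarrow> f x \<noteq> {} \<Longrightarrow>
           \<exists>q y. G (H p) = Some q \<and> dY (K (baire_pair p q)) = Some y \<and> y \<in> f x"
  shows "weihrauch_le dX dY f dZ dW g"
  unfolding weihrauch_le_def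
proof (intro exI conjI allI impI)
  show "computable (\<lambda>p. Some (K p))" "computable (\<lambda>p. Some (H p))"
    using assms(1,2) by (simp_all add: computable_rec_fn)
  fix G assume G: "realizer dZ dW g G"
  show "realizer dX dY f (\<lambda>p. Option.bind (Some (H p)) (\<lambda>h. Option.bind (G h) (\<lambda>q. Some (K (baire_pair p q)))))"
    unfolding realizer_def
  proof (intro allI impI)
    fix p x assume "dX p = Some x" "f x \<noteq> {}"
    then obtain q y where "G (H p) = Some q" "dY (K (baire_pair p q)) = Some y" "y \<in> f x"
      using assms(3)[OF G] by blast
    then show "\<exists>q' y. Option.bind (Some (H p)) (\<lambda>h. Option.bind (G h) (\<lambda>q. Some (K (baire_pair p q)))) = Some q'
        \<and> dY q' = Some y \<and> y \<in> f x" by auto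
  qed
qed

text \<open>The i-th pair of an LLPO instance, read as Q i b: component b of pair i.\<close>
definition llpo_query :: "baire \<Rightarrow> nat \<Rightarrow> nat" where
  "llpo_query p z = p (prod_encode (fst (prod_decode z),
      2 * snd (prod_decode (snd (prod_decode z))) + fst (prod_decode (snd (prod_decode z)))))"

lemma inst_of_llpo_query:
  assumes "rep_seq (rep_prod rep_cantor rep_cantor) p = Some xs"
  shows "inst_of llpo_query p i b = (if b then snd (xs i) else fst (xs i))"
proof -
  have "rep_prod rep_cantor rep_cantor (\<lambda>j. p (prod_encode (i, j))) \<noteq> None"
    and "xs i = the (rep_prod rep_cantor rep_cantor (\<lambda>j. p (prod_encode (i, j))))"
    using assms unfolding rep_seq_def by (auto split: if_splits)
  then have "xs i = ((\<lambda>m. p (prod_encode (i, 2 * m)) = 1), (\<lambda>m. p (prod_encode (i, 2 * m + 1)) = 1))"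
    unfolding rep_prod_def rep_cantor_def by (auto split: if_splits)
  then show ?thesis by (auto simp: inst_of_def llpo_query_def bit_nat_def)
qed

text \<open>The answer for index i is the move of the profile at the word 0^i 1.\<close>
definition index_word_code :: "nat \<Rightarrow> nat" where
  "index_word_code i = ((\<lambda>y. Suc (y + y)) ^^ i) 2"

lemma index_word_code_correct: "index_word_code i = wcode (replicate i False @ [True])"
  by (induction i) (auto simp: index_word_code_def)

definition llpo_answer :: "baire \<Rightarrow> nat \<Rightarrow> nat" where
  "llpo_answer p x = p (Suc (2 * index_word_code (fst (prod_decode x))))"

lemma rec_fn_llpo: "rec_fn llpo_query" "rec_fn llpo_answer"
proof -
  have "rec_fn (\<lambda>p z. llpo_query p z)" unfolding llpo_query_def mult_2
    by (intro rec_fn_query rec_fn_pair rec_fn_add rec_fn_fst rec_fn_snd rec_fn_id)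
  then show "rec_fn llpo_query" by simp
  have "rec_fn (\<lambda>p x. llpo_answer p x)" unfolding llpo_answer_def index_word_code_def mult_2
    by (intro rec_fn_query rec_fn_Suc rec_fn_add rec_fn_iterate rec_fn_fst rec_fn_id rec_fn_const)
  then show "rec_fn llpo_answer" by simp
qed

lemma llpo_answer_correct:
  assumes "rep_profile q = Some \<sigma>"
  shows "rep_seq rep_bool (llpo_answer (baire_pair p q)) = Some (\<lambda>i. \<sigma> (replicate i False @ [True]))"
proof -
  have "\<forall>w. q (wcode w) \<le> 1" and "\<sigma> = (\<lambda>w. q (wcode w) = 1)"
    using assms unfolding rep_profile_def by (auto split: if_splits)
  moreover have "llpo_answer (baire_pair p q) (prod_encode (i, j)) = q (index_word_code i)" for i j
    unfolding llpo_answer_def baire_pair_def by simp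
  ultimately show ?thesis
    unfolding rep_seq_def rep_bool_def index_word_code_correct by auto
qed

text \<open>Preprocessing: the name of G(Q) for the given sequence of pairs;
  postprocessing: read off the answers at the words 0^i 1.\<close>
lemma llpo_reduction:
  "weihrauch_le (rep_seq (rep_prod rep_cantor rep_cantor)) (rep_seq rep_bool)
     (hat (sigma_LLPO (Suc N))) (rep_game (Suc N)) rep_profile Det"
proof (rule weihrauch_leI[OF rec_fn_llpo(2) rec_fn_game_name[OF rec_fn_llpo(1)]])
  fix G p xs
  assume G: "realizer (rep_game (Suc N)) rep_profile Det G"
    and p: "rep_seq (rep_prod rep_cantor rep_cantor) p = Some xs"
    and solvable: "hat (sigma_LLPO (Suc N)) xs \<noteq> {}"
  define Q where "Q = inst_of llpo_query p"
  interpret quantifier_game N Q .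
  have Q: "Q i b = (if b then snd (xs i) else fst (xs i))" for i b
    unfolding Q_def by (rule inst_of_llpo_query[OF p])
  have total: "\<forall>i. \<exists>b. phi (Suc N) (Q i b)"
    using solvable unfolding hat_def sigma_LLPO_def Q by blast
  then have "Det game \<noteq> {}" using defender_winning unfolding Det_def by blast
  then obtain q \<sigma> where "G (game_name N llpo_query p) = Some q" "rep_profile q = Some \<sigma>" "\<sigma> \<in> Det game"
    using G game_name_correct unfolding realizer_def Q_def by blast
  moreover have "(\<lambda>i. \<sigma> (replicate i False @ [True])) \<in> hat (sigma_LLPO (Suc N)) xs"
    using profile_answers[OF total \<open>\<sigma> \<in> Det game\<close>] unfolding hat_def sigma_LLPO_def Q by simp
  ultimately show "\<exists>q y. G (game_name N llpo_query p) = Some q \<and>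
      rep_seq rep_bool (llpo_answer (baire_pair p q)) = Some y \<and> y \<in> hat (sigma_LLPO (Suc N)) xs"
    using llpo_answer_correct by blast
qed

text \<open>For LEM every Q i b is the input sequence; the answer is 1 iff the name of the
  winner is that of player 2.\<close>
definition lem_query :: "baire \<Rightarrow> nat \<Rightarrow> nat" where
  "lem_query p z = p (snd (prod_decode (snd (prod_decode z))))"

definition lem_answer :: "baire \<Rightarrow> nat \<Rightarrow> nat" where
  "lem_answer p x = (if p 1 = 2 then 1 else 0)"

lemma rec_fn_lem: "rec_fn lem_query" "rec_fn lem_answer"
proof -
  have "rec_fn (\<lambda>p z. lem_query p z)" unfolding lem_query_def
    by (intro rec_fn_query rec_fn_fst rec_fn_snd rec_fn_id)
  then show "rec_fn lem_query" by simp
  have "rec_fn (\<lambda>p x. lem_answer p x)" unfolding lem_answer_def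
    by (intro rec_fn_if dec_pred_eq rec_fn_query rec_fn_const)
  then show "rec_fn lem_answer" by simp
qed

lemma lem_reduction:
  "weihrauch_le rep_cantor rep_bool (sigma_LEM (Suc N)) (rep_game (Suc N)) rep_player Win"
proof (rule weihrauch_leI[OF rec_fn_lem(2) rec_fn_game_name[OF rec_fn_lem(1)]])
  fix G p x
  assume G: "realizer (rep_game (Suc N)) rep_player Win G" and p: "rep_cantor p = Some x"
  define Q where "Q = inst_of lem_query p"
  interpret quantifier_game N Q .
  have "Q i b = x" for i b
    using p unfolding Q_def by (auto simp: inst_of_def lem_query_def rep_cantor_def split: if_splits)
  then have winner: "Win game = (if phi (Suc N) x then {P2} else {P1})" by (simp add: Win_game)
  then obtain q pl where "G (game_name N lem_query p) = Some q" "rep_player q = Some pl" "pl \<in> Win game"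
    using G game_name_correct unfolding realizer_def Q_def by (metis empty_not_insert)
  moreover from this have "rep_bool (lem_answer (baire_pair p q)) = Some (phi (Suc N) x)"
    using winner unfolding rep_bool_def lem_answer_def baire_pair_def rep_player_def
    by (auto split: if_splits)
  ultimately show "\<exists>q y. G (game_name N lem_query p) = Some q \<and>
      rep_bool (lem_answer (baire_pair p q)) = Some y \<and> y \<in> sigma_LEM (Suc N) x"
    by (auto simp: sigma_LEM_def)
qed

theorem lemma14:
  fixes n :: nat
  assumes "n \<ge> 1"
  shows "weihrauch_le (rep_seq (rep_prod rep_cantor rep_cantor)) (rep_seq rep_bool)
            (hat (sigma_LLPO n)) (rep_game n) rep_profile Det
       \<and> weihrauch_le rep_cantor rep_bool (sigma_LEM n) (rep_game n) rep_player Win"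
proof -
  obtain N where "n = Suc N" using assms by (cases n) auto
  then show ?thesis using llpo_reduction lem_reduction by blast
qed

end
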